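(* In the i.i.d. setting below, assume [B1]–[B5]. Let $g:\mathbb R^d\times\{0,1\}\times(0,\infty)\times(0,\infty)\to\mathbb R$ be measurable with $E[|g(V^1)|^2\mid Z^1=1]<\infty$. Then, as $n\to\infty$, $$\frac1{nP(Z^1=1)}\sum_{i\in G^1}g(V^i)\to^pE\big[g(V^1)1_{\{X^1\in\mathcal X\}}\mid Z^1=1\big],\qquad n_1^-\sum_{i\in G^1}g(V^i)\to^pE\big[g(V^1)\mid X^1\in\mathcal X,Z^1=1\big].$$ In particular $n_1/(nP(Z^1=1))\to^pP(X^1\in\mathcal X\mid Z^1=1)>0$.
   Context: For each $n\in\mathbb N$, $\mathbb G=\{1,\dots,n\}$ and each $i$ has a survival time $T^i>0$, censoring time $U^i>0$, covariate $X^i\in\mathbb R^d$ and assignment $Z^i\in\{0,1\}$; the vectors $V^i=(X^i,Z^i,T^i,U^i)$, $i=1,\dots,n$, are i.i.d. for each $n$, and for each $z$ the conditional law of $(X^1,T^1,U^1)$ given $Z^1=z$ does not depend on $n$. Put $\widetilde T^i=T^i\wedge U^i$, $\mathbb G^z=\{i:Z^i=z\}$, $Y^i_t=1_{\{\widetilde T^i\ge t\}}$. Fix $\tau>0$, a compact $\mathcal X\subset\mathbb R^d$ and, for each $n$, a finite partition $\mathbb A$ of $\mathcal X$ into measurable sets; $d_n=\max_{a\in\mathbb A}\mathrm{diam}(a)$. Let $\mathcal P=\{(i,j)\in\mathbb G^1\times\mathbb G^0:\ X^i,X^j\in a\text{ for some }a\in\mathbb A\}$, $G^1$ the set of first coordinates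 of elements of $\mathcal P$, $n_1=\#G^1$; $x^-=x^{-1}$ if $x\ne0$, $0^-=0$. $a_n\lesssim b_n$ means $a_n\le Cb_n$ for a constant $C>0$ and all $n$; $a_n\asymp b_n$ means both $\lesssim$ and $\gtrsim$. [B1]: constants $\beta,\theta\in(0,1)$ and $\bar d\in\{1,\dots,d\}$ satisfy $\beta<2\theta$ and $\bar d\theta<1$. [B2]: $P(Z^1=1)\asymp n^{\beta-1}$. [B3]: the conditional law of $X^1$ given $Z^1=z$ has a density $f(\cdot\mid z)$ w.r.t. a $\sigma$-finite measure $\nu$ on $\mathbb R^d$ with $\nu(\mathcal X)<\infty$, and $\operatorname{ess\,sup}_{x\in\mathcal X}f(x\mid1)<\infty$, $\operatorname{ess\,inf}_{x\in\mathcal X}\big(f(x\mid0)E[Y^1_\tau\mid X^1=x,Z^1=0]\big)>0$ (w.r.t. $\nu$). [B4]: $P(\widetilde T^1=s,X^1\in\mathcal X\mid Z^1=1)=0$ for all $s\in[0,\tau]$ and $P(\widetilde T^1\ge\tau,X^1\in\mathcal X\mid Z^1=1)>0$. [B5]: $d_n=O(n^{-\theta})$ and $n^{-\bar d\theta}\lesssim\min_{a\in\mathbb A}\nu(a)\le\max_{a\in\mathbb A}\nu(a)\lesssim n^{-\bar d\theta}$. *)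

theory Defs
  imports "HOL-Probability.Probability"
begin

text \<open>An observation V = (X, Z, T, U); the assignment Z is encoded as a boolean (True = 1).\<close>
type_synonym ('d) obs = "(real^'d::finite) \<times> bool \<times> real \<times> real"

definition obsM :: "('d::finite) obs measure" where
  "obsM = borel \<Otimes>\<^sub>M (count_space UNIV \<Otimes>\<^sub>M (borel \<Otimes>\<^sub>M borel))"

definition xtuM :: "((real^'d::finite) \<times> real \<times> real) measure" where
  "xtuM = borel \<Otimes>\<^sub>M (borel \<Otimes>\<^sub>M borel)"

definition Xof :: "('d::finite) obs \<Rightarrow> real^'d" where "Xof v = fst v"
definition Zof :: "('d::finite) obs \<Rightarrow> bool" where "Zof v = fst (snd v)"
definition Tof :: "('d::finite) obs \<Rightarrow> real" where "Tof v = fst (snd (snd v))"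
definition Uof :: "('d::finite) obs \<Rightarrow> real" where "Uof v = snd (snd (snd v))"

definition zevent :: "bool \<Rightarrow> ((real^'d::finite) \<times> real \<times> real) set \<Rightarrow> 'd obs set" where
  "zevent z A = {v. Zof v = z \<and> (Xof v, Tof v, Uof v) \<in> A}"

definition meas_partition :: "(real^'d::finite) set set \<Rightarrow> (real^'d) set \<Rightarrow> bool" where
  "meas_partition P S \<longleftrightarrow> finite P \<and> (\<forall>a\<in>P. a \<in> sets borel \<and> a \<noteq> {}) \<and> disjoint P \<and> \<Union>P = S"

definition sample_space :: "nat \<Rightarrow> ('d::finite) obs measure \<Rightarrow> (nat \<Rightarrow> 'd obs) measure" where
  "sample_space n L = PiM {1..n} (\<lambda>_. L)"

text \<open>G^1: treated units i (Z^i = 1) that are matched, i.e. share a cell of the partition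
  with some control unit j (Z^j = 0).\<close>
definition matched_treated :: "(real^'d::finite) set set \<Rightarrow> nat \<Rightarrow> (nat \<Rightarrow> 'd obs) \<Rightarrow> nat set" where
  "matched_treated A n \<omega> =
     {i \<in> {1..n}. Zof (\<omega> i) \<and>
        (\<exists>j \<in> {1..n}. \<not> Zof (\<omega> j) \<and> (\<exists>a\<in>A. Xof (\<omega> i) \<in> a \<and> Xof (\<omega> j) \<in> a))}"

definition pinv :: "real \<Rightarrow> real" where "pinv x = (if x = 0 then 0 else 1 / x)"

definition conv_prob :: "(nat \<Rightarrow> 'a measure) \<Rightarrow> (nat \<Rightarrow> 'a \<Rightarrow> real) \<Rightarrow> real \<Rightarrow> bool" where
  "conv_prob M Y c \<longleftrightarrow>
     (\<forall>\<epsilon>>0. (\<lambda>n. measure (M n) {\<omega> \<in> space (M n). \<bar>Y n \<omega> - c\<bar> > \<epsilon>}) \<longlonglongrightarrow> 0)"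

end

theory Submission
  imports Defs
begin

text \<open>
  The treated units whose covariate lies in \<open>\<X>\<close> contribute a sum of \<open>n\<close> i.i.d. terms with
  mean \<open>n p \<mu>\<close> and second moment at most \<open>n p E[g\<^sup>2]\<close>; since \<open>n p \<asymp> n\<^sup>\<beta> \<rightarrow> \<infinity>\<close>, Chebyshev's
  inequality gives a law of large numbers for this sum at the scale \<open>n p\<close>. A treated unit in a
  cell \<open>a\<close> is left unmatched only if none of the other \<open>n - 1\<close> units is a control in \<open>a\<close>, which
  has probability \<open>(1 - (1 - p) Q\<^sub>0(a))\<^bsup>n-1\<^esup> \<le> exp (-(n - 1)(1 - p) \<kappa> n\<^bsup>-d\<theta>\<^esup>)\<close>, where the lower
  bound on \<open>Q\<^sub>0(a)\<close> comes from the density bound [B3] and the cell volumes [B5]. As \<open>d\<theta> < 1\<close>, the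
  expected contribution of the unmatched units is \<open>o(n p)\<close> and Markov's inequality discards it.
  Applying this to \<open>g\<close> and to the constant \<open>1\<close> and dividing yields the other two statements.
\<close>

section \<open>Convergence in probability up to measurable covers\<close>

text \<open>The deviation events of \<open>Y\<close> need not be measurable (the set of matched units is an
  unwieldy function of the sample), so they are only required to lie in measurable sets of
  vanishing measure. This implies \<open>conv_prob\<close>, which assigns the junk measure 0 to
  non-measurable sets.\<close>

definition conv_prob_outer :: "(nat \<Rightarrow> 'a measure) \<Rightarrow> (nat \<Rightarrow> 'a \<Rightarrow> real) \<Rightarrow> real \<Rightarrow> bool" where
  "conv_prob_outer M Y c \<longleftrightarrow> (\<forall>\<epsilon>>0. \<exists>E. (\<forall>n. E n \<in> sets (M n)) \<and>
     (\<forall>\<^sub>F n in sequentially. {\<omega>\<in>space (M n). \<epsilon> < \<bar>Y n \<omega> - c\<bar>} \<subseteq> E n) \<and>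
     (\<lambda>n. measure (M n) (E n)) \<longlonglongrightarrow> 0)"

lemma conv_prob_outer_imp_conv_prob:
  assumes "\<And>n. finite_measure (M n)" and "conv_prob_outer M Y c"
  shows "conv_prob M Y c"
  unfolding conv_prob_def
proof (intro allI impI)
  fix \<epsilon> :: real assume "0 < \<epsilon>"
  then obtain E where E: "\<And>n. E n \<in> sets (M n)"
    "\<forall>\<^sub>F n in sequentially. {\<omega>\<in>space (M n). \<epsilon> < \<bar>Y n \<omega> - c\<bar>} \<subseteq> E n"
    "(\<lambda>n. measure (M n) (E n)) \<longlonglongrightarrow> 0"
    using assms(2) unfolding conv_prob_outer_def by blast
  have "\<forall>\<^sub>F n in sequentially. measure (M n) {\<omega>\<in>space (M n). \<epsilon> < \<bar>Y n \<omega> - c\<bar>} \<le> measure (M n) (E n)"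
    using E(2) by eventually_elim (use assms(1) E(1) finite_measure.finite_measure_mono in blast)
  then show "(\<lambda>n. measure (M n) {\<omega>\<in>space (M n). \<epsilon> < \<bar>Y n \<omega> - c\<bar>}) \<longlonglongrightarrow> 0"
    by (intro tendsto_sandwich[OF _ _ tendsto_const E(3)]) auto
qed

lemma conv_prob_outer_of_measure_bound:
  assumes "\<And>n. Y n \<in> borel_measurable (M n)"
    and "\<And>\<epsilon>. 0 < \<epsilon> \<Longrightarrow> \<exists>b. b \<longlonglongrightarrow> 0 \<and>
           (\<forall>\<^sub>F n in sequentially. measure (M n) {\<omega>\<in>space (M n). \<epsilon> < \<bar>Y n \<omega> - c\<bar>} \<le> b n)"
  shows "conv_prob_outer M Y c"
  unfolding conv_prob_outer_def
proof (intro allI impI)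
  fix \<epsilon> :: real assume "0 < \<epsilon>"
  then obtain b where "b \<longlonglongrightarrow> 0"
    and b: "\<forall>\<^sub>F n in sequentially. measure (M n) {\<omega>\<in>space (M n). \<epsilon> < \<bar>Y n \<omega> - c\<bar>} \<le> b n"
    using assms(2) by blast
  have "(\<lambda>n. measure (M n) {\<omega>\<in>space (M n). \<epsilon> < \<bar>Y n \<omega> - c\<bar>}) \<longlonglongrightarrow> 0"
    by (rule tendsto_sandwich[OF _ b tendsto_const \<open>b \<longlonglongrightarrow> 0\<close>]) simp
  then show "\<exists>E. (\<forall>n. E n \<in> sets (M n)) \<and>
     (\<forall>\<^sub>F n in sequentially. {\<omega>\<in>space (M n). \<epsilon> < \<bar>Y n \<omega> - c\<bar>} \<subseteq> E n) \<and>
     (\<lambda>n. measure (M n) (E n)) \<longlonglongrightarrow> 0"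
    using assms(1) by (intro exI[of _ "\<lambda>n. {\<omega>\<in>space (M n). \<epsilon> < \<bar>Y n \<omega> - c\<bar>}"]) auto
qed

lemma conv_prob_outer_cong:
  assumes "conv_prob_outer M Y c" and "\<forall>\<^sub>F n in sequentially. \<forall>\<omega>\<in>space (M n). Y' n \<omega> = Y n \<omega>"
  shows "conv_prob_outer M Y' c"
  unfolding conv_prob_outer_def
proof (intro allI impI)
  fix \<epsilon> :: real assume "0 < \<epsilon>"
  then obtain E where E: "\<And>n. E n \<in> sets (M n)"
    "\<forall>\<^sub>F n in sequentially. {\<omega>\<in>space (M n). \<epsilon> < \<bar>Y n \<omega> - c\<bar>} \<subseteq> E n"
    "(\<lambda>n. measure (M n) (E n)) \<longlonglongrightarrow> 0"
    using assms(1) unfolding conv_prob_outer_def by blast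
  have "\<forall>\<^sub>F n in sequentially. {\<omega>\<in>space (M n). \<epsilon> < \<bar>Y' n \<omega> - c\<bar>} \<subseteq> E n"
    using E(2) assms(2) by eventually_elim auto
  with E(1,3) show "\<exists>E. (\<forall>n. E n \<in> sets (M n)) \<and>
     (\<forall>\<^sub>F n in sequentially. {\<omega>\<in>space (M n). \<epsilon> < \<bar>Y' n \<omega> - c\<bar>} \<subseteq> E n) \<and>
     (\<lambda>n. measure (M n) (E n)) \<longlonglongrightarrow> 0" by blast
qed

lemma conv_prob_outer_compose2:
  assumes A: "conv_prob_outer M A a" and B: "conv_prob_outer M B b"
    and close: "\<And>\<epsilon>. 0 < \<epsilon> \<Longrightarrow> \<exists>\<delta>>0. \<forall>\<^sub>F n in sequentially. \<forall>\<omega>\<in>space (M n).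
                  \<bar>A n \<omega> - a\<bar> \<le> \<delta> \<longrightarrow> \<bar>B n \<omega> - b\<bar> \<le> \<delta> \<longrightarrow> \<bar>Y n \<omega> - c\<bar> \<le> \<epsilon>"
  shows "conv_prob_outer M Y c"
  unfolding conv_prob_outer_def
proof (intro allI impI)
  fix \<epsilon> :: real assume "0 < \<epsilon>"
  then obtain \<delta> where "0 < \<delta>" and \<delta>: "\<forall>\<^sub>F n in sequentially. \<forall>\<omega>\<in>space (M n).
      \<bar>A n \<omega> - a\<bar> \<le> \<delta> \<longrightarrow> \<bar>B n \<omega> - b\<bar> \<le> \<delta> \<longrightarrow> \<bar>Y n \<omega> - c\<bar> \<le> \<epsilon>"
    using close by blast
  obtain E1 where E1: "\<And>n. E1 n \<in> sets (M n)"
    "\<forall>\<^sub>F n in sequentially. {\<omega>\<in>space (M n). \<delta> < \<bar>A n \<omega> - a\<bar>} \<subseteq> E1 n"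
    "(\<lambda>n. measure (M n) (E1 n)) \<longlonglongrightarrow> 0"
    using A \<open>0 < \<delta>\<close> unfolding conv_prob_outer_def by blast
  obtain E2 where E2: "\<And>n. E2 n \<in> sets (M n)"
    "\<forall>\<^sub>F n in sequentially. {\<omega>\<in>space (M n). \<delta> < \<bar>B n \<omega> - b\<bar>} \<subseteq> E2 n"
    "(\<lambda>n. measure (M n) (E2 n)) \<longlonglongrightarrow> 0"
    using B \<open>0 < \<delta>\<close> unfolding conv_prob_outer_def by blast
  have cover: "\<forall>\<^sub>F n in sequentially. {\<omega>\<in>space (M n). \<epsilon> < \<bar>Y n \<omega> - c\<bar>} \<subseteq> E1 n \<union> E2 n"
    using \<delta> E1(2) E2(2) by eventually_elim (force simp: not_less)
  have "(\<lambda>n. measure (M n) (E1 n \<union> E2 n)) \<longlonglongrightarrow> 0"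
  proof (rule tendsto_sandwich[OF _ _ tendsto_const])
    show "(\<lambda>n. measure (M n) (E1 n) + measure (M n) (E2 n)) \<longlonglongrightarrow> 0"
      using tendsto_add[OF E1(3) E2(3)] by simp
    show "\<forall>\<^sub>F n in sequentially. measure (M n) (E1 n \<union> E2 n) \<le> measure (M n) (E1 n) + measure (M n) (E2 n)"
      using E1(1) E2(1) by (intro always_eventually allI measure_Un_le)
  qed auto
  with cover E1(1) E2(1) show "\<exists>E. (\<forall>n. E n \<in> sets (M n)) \<and>
     (\<forall>\<^sub>F n in sequentially. {\<omega>\<in>space (M n). \<epsilon> < \<bar>Y n \<omega> - c\<bar>} \<subseteq> E n) \<and>
     (\<lambda>n. measure (M n) (E n)) \<longlonglongrightarrow> 0"
    by (intro exI[of _ "\<lambda>n. E1 n \<union> E2 n"]) auto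
qed

lemma conv_prob_outer_perturb:
  assumes A: "conv_prob_outer M A a" and B: "conv_prob_outer M B 0"
    and le: "\<forall>\<^sub>F n in sequentially. \<forall>\<omega>\<in>space (M n). \<bar>Y n \<omega> - A n \<omega>\<bar> \<le> B n \<omega>"
  shows "conv_prob_outer M Y a"
proof (rule conv_prob_outer_compose2[OF A B])
  fix \<epsilon> :: real assume "0 < \<epsilon>"
  have "\<forall>\<^sub>F n in sequentially. \<forall>\<omega>\<in>space (M n).
      \<bar>A n \<omega> - a\<bar> \<le> \<epsilon>/2 \<longrightarrow> \<bar>B n \<omega> - 0\<bar> \<le> \<epsilon>/2 \<longrightarrow> \<bar>Y n \<omega> - a\<bar> \<le> \<epsilon>"
    using le
  proof eventually_elim
    case (elim n)
    show ?case
    proof (intro ballI impI)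
      fix \<omega> assume "\<omega> \<in> space (M n)" "\<bar>A n \<omega> - a\<bar> \<le> \<epsilon>/2" "\<bar>B n \<omega> - 0\<bar> \<le> \<epsilon>/2"
      moreover have "\<bar>Y n \<omega> - A n \<omega>\<bar> \<le> B n \<omega>" using elim \<open>\<omega> \<in> space (M n)\<close> by blast
      ultimately show "\<bar>Y n \<omega> - a\<bar> \<le> \<epsilon>" by arith
    qed
  qed
  with \<open>0 < \<epsilon>\<close> show "\<exists>\<delta>>0. \<forall>\<^sub>F n in sequentially. \<forall>\<omega>\<in>space (M n).
      \<bar>A n \<omega> - a\<bar> \<le> \<delta> \<longrightarrow> \<bar>B n \<omega> - 0\<bar> \<le> \<delta> \<longrightarrow> \<bar>Y n \<omega> - a\<bar> \<le> \<epsilon>"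
    by (intro exI[of _ "\<epsilon>/2"]) auto
qed

lemma abs_divide_diff_le:
  fixes a b x y \<epsilon> :: real
  assumes "0 < b" "0 < \<epsilon>"
    and x: "\<bar>x - a\<bar> \<le> min (b/2) (\<epsilon> * b\<^sup>2 / (2 * (b + \<bar>a\<bar>)))"
    and y: "\<bar>y - b\<bar> \<le> min (b/2) (\<epsilon> * b\<^sup>2 / (2 * (b + \<bar>a\<bar>)))"
  shows "\<bar>x / y - a / b\<bar> \<le> \<epsilon>"
proof -
  define \<delta> where "\<delta> = \<epsilon> * b\<^sup>2 / (2 * (b + \<bar>a\<bar>))"
  have "\<bar>y - b\<bar> \<le> b / 2" using y by simp
  then have "b / 2 \<le> y" by arith
  with \<open>0 < b\<close> have "0 < y" and den: "b\<^sup>2 / 2 \<le> y * b"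
    by (auto simp: power2_eq_square intro: mult_right_mono[of "b/2" y b, simplified])
  have "\<bar>(x - a) * b - a * (y - b)\<bar> \<le> \<bar>x - a\<bar> * b + \<bar>a\<bar> * \<bar>y - b\<bar>"
    using \<open>0 < b\<close> abs_triangle_ineq4[of "(x - a) * b" "a * (y - b)"] by (simp add: abs_mult)
  also have "\<dots> \<le> \<delta> * b + \<bar>a\<bar> * \<delta>"
    using x y \<open>0 < b\<close> unfolding \<delta>_def by (intro add_mono mult_right_mono mult_left_mono) auto
  also have "\<dots> = \<delta> * (b + \<bar>a\<bar>)" by (simp add: algebra_simps)
  also have "\<dots> = \<epsilon> * b\<^sup>2 / 2"
  proof -
    have "0 < b + \<bar>a\<bar>" using \<open>0 < b\<close> by simp
    then show ?thesis by (simp add: \<delta>_def field_simps)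
  qed
  finally have num: "\<bar>(x - a) * b - a * (y - b)\<bar> \<le> \<epsilon> * b\<^sup>2 / 2" .
  have "\<bar>x / y - a / b\<bar> = \<bar>(x - a) * b - a * (y - b)\<bar> / (y * b)"
    using \<open>0 < y\<close> \<open>0 < b\<close> by (simp add: field_simps abs_div)
  also have "\<dots> \<le> (\<epsilon> * b\<^sup>2 / 2) / (b\<^sup>2 / 2)"
    using num den \<open>0 < y\<close> \<open>0 < b\<close> \<open>0 < \<epsilon>\<close> by (intro frac_le) auto
  also have "\<dots> = \<epsilon>" using \<open>0 < b\<close> by simp
  finally show ?thesis .
qed

lemma conv_prob_outer_divide:
  assumes "conv_prob_outer M A a" and "conv_prob_outer M B b" and "0 < b"
  shows "conv_prob_outer M (\<lambda>n \<omega>. A n \<omega> / B n \<omega>) (a / b)"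
proof (rule conv_prob_outer_compose2[OF assms(1,2)])
  fix \<epsilon> :: real assume "0 < \<epsilon>"
  define \<delta> where "\<delta> = min (b/2) (\<epsilon> * b\<^sup>2 / (2 * (b + \<bar>a\<bar>)))"
  have "0 < \<delta>"
    using \<open>0 < b\<close> \<open>0 < \<epsilon>\<close> unfolding \<delta>_def by (auto intro!: divide_pos_pos add_pos_nonneg)
  then show "\<exists>\<delta>>0. \<forall>\<^sub>F n in sequentially. \<forall>\<omega>\<in>space (M n).
      \<bar>A n \<omega> - a\<bar> \<le> \<delta> \<longrightarrow> \<bar>B n \<omega> - b\<bar> \<le> \<delta> \<longrightarrow> \<bar>A n \<omega> / B n \<omega> - a / b\<bar> \<le> \<epsilon>"
    using abs_divide_diff_le[OF \<open>0 < b\<close> \<open>0 < \<epsilon>\<close>, where a=a] unfolding \<delta>_def[symmetric]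
    by (intro exI[of _ \<delta>] conjI always_eventually allI) blast+
qed

section \<open>Sums of i.i.d. variables and elementary estimates\<close>

lemma
  fixes f :: "'i \<Rightarrow> 'a \<Rightarrow> real"
  assumes M: "prob_space M" and "finite I" "J \<subseteq> I" and f: "\<And>k. k \<in> J \<Longrightarrow> integrable M (f k)"
  shows integrable_PiM_prod_components: "integrable (PiM I (\<lambda>_. M)) (\<lambda>\<omega>. \<Prod>k\<in>J. f k (\<omega> k))"
    and integral_PiM_prod_components:
      "(\<integral>\<omega>. (\<Prod>k\<in>J. f k (\<omega> k)) \<partial>PiM I (\<lambda>_. M)) = (\<Prod>k\<in>J. integral\<^sup>L M (f k))"
proof -
  interpret M: prob_space M by (rule M)
  interpret product_sigma_finite "\<lambda>_::'i. M"
    by (simp add: product_sigma_finite_def M.sigma_finite_measure_axioms)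
  define F where "F k = (if k \<in> J then f k else (\<lambda>_. 1))" for k
  have F: "integrable M (F k)" for k
    using f by (simp add: F_def)
  have "(\<Prod>k\<in>I. F k (\<omega> k)) = (\<Prod>k\<in>J. f k (\<omega> k))" for \<omega>
    using assms(2,3) by (subst prod.mono_neutral_right[of I J]) (auto simp: F_def)
  moreover have "(\<Prod>k\<in>I. integral\<^sup>L M (F k)) = (\<Prod>k\<in>J. integral\<^sup>L M (f k))"
    using assms(2,3) by (subst prod.mono_neutral_right[of I J]) (auto simp: F_def M.prob_space)
  ultimately show "integrable (PiM I (\<lambda>_. M)) (\<lambda>\<omega>. \<Prod>k\<in>J. f k (\<omega> k))"
    and "(\<integral>\<omega>. (\<Prod>k\<in>J. f k (\<omega> k)) \<partial>PiM I (\<lambda>_. M)) = (\<Prod>k\<in>J. integral\<^sup>L M (f k))"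
    using product_integrable_prod[OF \<open>finite I\<close>, of F] product_integral_prod[OF \<open>finite I\<close>, of F] F
    by simp_all
qed

lemma
  fixes d :: "'a \<Rightarrow> real"
  assumes M: "prob_space M" and "finite I" and d[measurable]: "d \<in> borel_measurable M"
    and d2: "integrable M (\<lambda>v. (d v)\<^sup>2)" and mean: "integral\<^sup>L M d = 0"
  shows integrable_PiM_centered_sum_square:
      "integrable (PiM I (\<lambda>_. M)) (\<lambda>\<omega>. (\<Sum>i\<in>I. d (\<omega> i))\<^sup>2)"
    and integral_PiM_centered_sum_square:
      "(\<integral>\<omega>. (\<Sum>i\<in>I. d (\<omega> i))\<^sup>2 \<partial>PiM I (\<lambda>_. M)) = real (card I) * integral\<^sup>L M (\<lambda>v. (d v)\<^sup>2)"
proof -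
  let ?P = "PiM I (\<lambda>_. M)"
  have d1: "integrable M d"
    using finite_measure.square_integrable_imp_integrable[OF prob_space.finite_measure[OF M] d d2] .
  have cross: "integrable ?P (\<lambda>\<omega>. d (\<omega> i) * d (\<omega> j)) \<and>
      (\<integral>\<omega>. d (\<omega> i) * d (\<omega> j) \<partial>?P) = (if i = j then integral\<^sup>L M (\<lambda>v. (d v)\<^sup>2) else 0)"
    if "i \<in> I" "j \<in> I" for i j
  proof (cases "i = j")
    case True
    then show ?thesis
      using integrable_PiM_prod_components[OF M \<open>finite I\<close>, of "{i}" "\<lambda>_ v. (d v)\<^sup>2"]
        integral_PiM_prod_components[OF M \<open>finite I\<close>, of "{i}" "\<lambda>_ v. (d v)\<^sup>2"] that d2
      by (simp add: power2_eq_square)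
  next
    case False
    then show ?thesis
      using integrable_PiM_prod_components[OF M \<open>finite I\<close>, of "{i, j}" "\<lambda>_. d"]
        integral_PiM_prod_components[OF M \<open>finite I\<close>, of "{i, j}" "\<lambda>_. d"] that d1 mean
      by simp
  qed
  have square: "(\<Sum>i\<in>I. d (\<omega> i))\<^sup>2 = (\<Sum>i\<in>I. \<Sum>j\<in>I. d (\<omega> i) * d (\<omega> j))" for \<omega>
    by (simp add: power2_eq_square sum_product)
  show "integrable ?P (\<lambda>\<omega>. (\<Sum>i\<in>I. d (\<omega> i))\<^sup>2)"
    unfolding square using cross by (intro Bochner_Integration.integrable_sum) blast
  have "(\<integral>\<omega>. (\<Sum>i\<in>I. d (\<omega> i))\<^sup>2 \<partial>?P) = (\<Sum>i\<in>I. \<Sum>j\<in>I. \<integral>\<omega>. d (\<omega> i) * d (\<omega> j) \<partial>?P)"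
    unfolding square using cross
    by (simp add: Bochner_Integration.integral_sum Bochner_Integration.integrable_sum)
  also have "\<dots> = (\<Sum>i\<in>I. \<Sum>j\<in>I. if i = j then integral\<^sup>L M (\<lambda>v. (d v)\<^sup>2) else 0)"
    using cross by (intro sum.cong) auto
  finally show "(\<integral>\<omega>. (\<Sum>i\<in>I. d (\<omega> i))\<^sup>2 \<partial>?P) = real (card I) * integral\<^sup>L M (\<lambda>v. (d v)\<^sup>2)"
    using \<open>finite I\<close> by simp
qed

lemma iid_sum_deviation_le:
  fixes h :: "'a \<Rightarrow> real"
  assumes M: "prob_space M" and "finite I" and h[measurable]: "h \<in> borel_measurable M"
    and h2: "integrable M (\<lambda>v. (h v)\<^sup>2)" and "0 < a"
  shows "measure (PiM I (\<lambda>_. M)) {\<omega>\<in>space (PiM I (\<lambda>_. M)).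
           a \<le> \<bar>(\<Sum>i\<in>I. h (\<omega> i)) - real (card I) * integral\<^sup>L M h\<bar>}
         \<le> real (card I) * integral\<^sup>L M (\<lambda>v. (h v)\<^sup>2) / a\<^sup>2"
proof -
  interpret M: prob_space M by (rule M)
  interpret P: prob_space "PiM I (\<lambda>_. M)" by (intro prob_space_PiM M)
  define \<mu> where "\<mu> = integral\<^sup>L M h"
  define d where "d v = h v - \<mu>" for v
  have dm[measurable]: "d \<in> borel_measurable M" unfolding d_def[abs_def] by measurable
  have h1: "integrable M h" using M.square_integrable_imp_integrable[OF h h2] .
  have d2_eq: "(d v)\<^sup>2 = (h v)\<^sup>2 - 2 * \<mu> * h v + \<mu>\<^sup>2" for v
    by (simp add: d_def power2_eq_square algebra_simps)
  have d2: "integrable M (\<lambda>v. (d v)\<^sup>2)"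
    unfolding d2_eq using h1 h2 by auto
  have "integral\<^sup>L M (\<lambda>v. (d v)\<^sup>2) = integral\<^sup>L M (\<lambda>v. (h v)\<^sup>2) - \<mu>\<^sup>2"
    unfolding d2_eq using h1 h2 by (simp add: \<mu>_def power2_eq_square M.prob_space)
  then have var_le: "integral\<^sup>L M (\<lambda>v. (d v)\<^sup>2) \<le> integral\<^sup>L M (\<lambda>v. (h v)\<^sup>2)"
    by simp
  have mean: "integral\<^sup>L M d = 0"
    unfolding d_def[abs_def] using h1 by (simp add: \<mu>_def M.prob_space)
  have sum_d: "(\<Sum>i\<in>I. d (\<omega> i)) = (\<Sum>i\<in>I. h (\<omega> i)) - real (card I) * \<mu>" for \<omega>
    by (simp add: d_def sum_subtractf)
  have "measure (PiM I (\<lambda>_. M)) {\<omega>\<in>space (PiM I (\<lambda>_. M)). \<bar>\<Sum>i\<in>I. d (\<omega> i)\<bar> \<ge> a}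
      \<le> (\<integral>\<omega>. (\<Sum>i\<in>I. d (\<omega> i))\<^sup>2 \<partial>PiM I (\<lambda>_. M)) / a\<^sup>2"
    using integrable_PiM_centered_sum_square[OF M \<open>finite I\<close> dm d2 mean] \<open>0 < a\<close>
    by (intro P.second_moment_method) auto
  also have "\<dots> \<le> real (card I) * integral\<^sup>L M (\<lambda>v. (h v)\<^sup>2) / a\<^sup>2"
    unfolding integral_PiM_centered_sum_square[OF M \<open>finite I\<close> dm d2 mean]
    using var_le by (intro divide_right_mono mult_left_mono) auto
  finally show ?thesis by (simp add: sum_d \<mu>_def)
qed

lemma (in prob_space) integral_one_minus_indicator:
  "A \<in> events \<Longrightarrow> (\<integral>x. 1 - indicator A x \<partial>M) = 1 - prob A"
  by (subst Bochner_Integration.integral_diff) (auto simp: prob_space emeasure_eq_measure Int_absorb2)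

lemma one_minus_power_le_exp:
  fixes x :: real
  assumes "x \<le> 1"
  shows "(1 - x) ^ k \<le> exp (- (real k * x))"
proof -
  have "(1 - x) ^ k \<le> exp (- x) ^ k"
    using assms exp_ge_add_one_self[of "- x"] by (intro power_mono) auto
  then show ?thesis by (simp add: exp_of_nat_mult[symmetric])
qed

lemma powr_real_at_top:
  assumes "0 < k" "0 < s"
  shows "filterlim (\<lambda>n. k * real n powr s) at_top sequentially"
proof -
  have lim: "((\<lambda>n. inverse k * real n powr (- s)) \<longlongrightarrow> inverse k * 0) sequentially"
    using assms(2) by (intro tendsto_mult tendsto_const tendsto_neg_powr filterlim_real_sequentially) auto
  have "\<forall>\<^sub>F n in sequentially. 0 < inverse k * real n powr (- s)"
    using eventually_gt_at_top[of "0::nat"] by eventually_elim (use assms(1) in simp)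
  with lim have "filterlim (\<lambda>n. inverse (inverse k * real n powr (- s))) at_top sequentially"
    by (intro filterlim_inverse_at_top) simp_all
  then show ?thesis
    by (simp add: powr_minus)
qed

lemma mult_at_top_of_powr_lower:
  fixes x :: "nat \<Rightarrow> real"
  assumes "0 < c" "0 < s" and lower: "\<forall>\<^sub>F n in sequentially. c * real n powr (s - 1) \<le> x n"
  shows "filterlim (\<lambda>n. real n * x n) at_top sequentially"
proof (rule filterlim_at_top_mono[OF powr_real_at_top[OF assms(1,2)]])
  show "\<forall>\<^sub>F n in sequentially. c * real n powr s \<le> real n * x n"
    using lower eventually_gt_at_top[of "0::nat"]
  proof eventually_elim
    case (elim n)
    then have "c * real n powr s = real n * (c * real n powr (s - 1))"
      by (simp add: powr_diff field_simps)
    also have "\<dots> \<le> real n * x n" using elim by (intro mult_left_mono) auto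
    finally show ?case .
  qed
qed

lemma tendsto_0_of_powr_upper:
  fixes x :: "nat \<Rightarrow> real"
  assumes "s < 1" and "\<forall>\<^sub>F n in sequentially. 0 \<le> x n \<and> x n \<le> C * real n powr (s - 1)"
  shows "x \<longlonglongrightarrow> 0"
proof (rule tendsto_sandwich[OF _ _ tendsto_const])
  show "(\<lambda>n. C * real n powr (s - 1)) \<longlonglongrightarrow> 0"
    using assms(1) by (intro tendsto_mult_right_zero tendsto_neg_powr filterlim_real_sequentially) auto
qed (use assms(2) in \<open>auto elim: eventually_mono\<close>)

lemma measure_vimage_ge_of_density_lower:
  fixes X :: "'a \<Rightarrow> 'b::topological_space"
  assumes "finite_measure Q" and X: "X \<in> borel_measurable Q"
    and dens: "distr Q borel X = density \<nu> (\<lambda>x. ennreal (f x))"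
    and f: "f \<in> borel_measurable borel" and \<nu>: "sets \<nu> = sets borel" and a: "a \<in> sets borel"
    and lower: "AE x in \<nu>. x \<in> a \<longrightarrow> c \<le> f x" and "0 \<le> c"
  shows "c * measure \<nu> a \<le> measure Q (X -` a \<inter> space Q)"
proof (cases "emeasure \<nu> a = \<infinity>")
  case True
  then show ?thesis by (simp add: measure_def) \<comment> \<open>\<open>measure \<nu> a\<close> is the junk value 0\<close>
next
  case False
  interpret Q: finite_measure Q by fact
  have "ennreal c * emeasure \<nu> a = (\<integral>\<^sup>+x. ennreal c * indicator a x \<partial>\<nu>)"
    using a \<nu> by (simp add: nn_integral_cmult_indicator)
  also have "\<dots> \<le> (\<integral>\<^sup>+x. ennreal (f x) * indicator a x \<partial>\<nu>)"
    using lower by (intro nn_integral_mono_AE) (auto elim!: eventually_mono split: split_indicator intro: ennreal_leI)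
  also have "\<dots> = emeasure (distr Q borel X) a"
    using a \<nu> f unfolding dens by (subst emeasure_density) (auto simp: measurable_cong_sets[OF \<nu> refl])
  also have "\<dots> = emeasure Q (X -` a \<inter> space Q)"
    using a X by (simp add: emeasure_distr)
  finally have "ennreal (c * measure \<nu> a) \<le> ennreal (measure Q (X -` a \<inter> space Q))"
    using False \<open>0 \<le> c\<close> by (simp add: Q.emeasure_eq_measure emeasure_eq_ennreal_measure ennreal_mult less_top[symmetric])
  then show ?thesis
    by (simp add: ennreal_le_iff)
qed

section \<open>The observation model\<close>

definition XTUof :: "('d::finite) obs \<Rightarrow> (real^'d) \<times> real \<times> real" where
  "XTUof v = (Xof v, Tof v, Uof v)"

definition treated_obs :: "(real^'d) \<times> real \<times> real \<Rightarrow> ('d::finite) obs" where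
  "treated_obs w = (fst w, True, snd w)"

definition treated_in :: "(real^'d) set \<Rightarrow> ('d::finite) obs set" where
  "treated_in B = {v. Zof v \<and> Xof v \<in> B}"

definition control_in :: "(real^'d) set \<Rightarrow> ('d::finite) obs set" where
  "control_in B = {v. \<not> Zof v \<and> Xof v \<in> B}"

lemma treated_obs_XTUof: "Zof v \<Longrightarrow> treated_obs (XTUof v) = v"
  by (cases v) (simp add: XTUof_def treated_obs_def Xof_def Zof_def Tof_def Uof_def)

lemma space_obsM [simp]: "space obsM = UNIV"
  by (simp add: obsM_def space_pair_measure)

lemma space_xtuM [simp]: "space xtuM = UNIV"
  by (simp add: xtuM_def space_pair_measure)

lemma measurable_Xof [measurable]: "Xof \<in> borel_measurable obsM"
  unfolding Xof_def[abs_def] obsM_def by measurable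

lemma measurable_Zof [measurable]: "Zof \<in> measurable obsM (count_space UNIV)"
  unfolding Zof_def[abs_def] obsM_def by measurable

lemma measurable_XTUof [measurable]: "XTUof \<in> measurable obsM xtuM"
  unfolding XTUof_def[abs_def] Xof_def Tof_def Uof_def obsM_def xtuM_def by measurable

lemma measurable_treated_obs [measurable]: "treated_obs \<in> measurable xtuM obsM"
  unfolding treated_obs_def[abs_def] obsM_def xtuM_def by measurable

lemma measurable_fst_xtuM [measurable]: "fst \<in> borel_measurable xtuM"
  unfolding xtuM_def by measurable

lemma Collect_in_sets_obsM: "Measurable.pred obsM P \<Longrightarrow> {v. P v} \<in> sets obsM"
  using pred_def[where M=obsM and P=P] by simp

lemma Collect_in_sets_xtuM: "Measurable.pred xtuM P \<Longrightarrow> {w. P w} \<in> sets xtuM"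
  using pred_def[where M=xtuM and P=P] by simp

lemma sets_Zof [measurable]: "{v. Zof v} \<in> sets obsM"
  by (rule Collect_in_sets_obsM) measurable

lemma sets_treated_in [measurable]:
  assumes [measurable]: "B \<in> sets borel" shows "treated_in B \<in> sets obsM"
  unfolding treated_in_def by (rule Collect_in_sets_obsM) measurable

lemma sets_control_in [measurable]:
  assumes [measurable]: "B \<in> sets borel" shows "control_in B \<in> sets obsM"
  unfolding control_in_def by (rule Collect_in_sets_obsM) measurable

lemma sets_fst_vimage [measurable]:
  assumes [measurable]: "B \<in> sets borel" shows "{w. fst w \<in> B} \<in> sets xtuM"
  by (rule Collect_in_sets_xtuM) measurable

locale treatment_mixture =
  fixes L :: "nat \<Rightarrow> ('d::finite) obs measure"
    and Q :: "bool \<Rightarrow> ((real^'d) \<times> real \<times> real) measure"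
    and p :: "nat \<Rightarrow> real"
  assumes Q_prob: "\<And>z. prob_space (Q z)" and Q_sets: "\<And>z. sets (Q z) = sets xtuM"
    and L_prob: "\<And>n. prob_space (L n)" and L_sets: "\<And>n. sets (L n) = sets obsM"
    and L_mix1: "\<And>n A. A \<in> sets xtuM \<Longrightarrow> measure (L n) (zevent True A) = p n * measure (Q True) A"
    and L_mix0: "\<And>n A. A \<in> sets xtuM \<Longrightarrow> measure (L n) (zevent False A) = (1 - p n) * measure (Q False) A"
begin

lemma sets_L_cong [measurable_cong]: "sets (L n) = sets obsM"
  by (rule L_sets)

lemma sets_Q_cong [measurable_cong]: "sets (Q z) = sets xtuM"
  by (rule Q_sets)

lemma space_L [simp]: "space (L n) = UNIV"
  using sets_eq_imp_space_eq[OF L_sets[of n]] by simp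

lemma space_Q [simp]: "space (Q z) = UNIV"
  using sets_eq_imp_space_eq[OF Q_sets[of z]] by simp

lemma p_bounds: "0 \<le> p n" "p n \<le> 1"
proof -
  interpret Q1: prob_space "Q True" by (rule Q_prob)
  interpret Ln: prob_space "L n" by (rule L_prob)
  have "p n = measure (L n) (zevent True UNIV)"
    using L_mix1[OF sets.top, of n] Q1.prob_space by simp
  then show "0 \<le> p n" "p n \<le> 1" by (simp_all add: Ln.prob_le_1)
qed

lemma distr_treated_part:
  "distr (density (L n) (\<lambda>v. ennreal (indicator {v. Zof v} v))) xtuM XTUof = density (Q True) (\<lambda>_. ennreal (p n))"
proof (rule measure_eqI)
  fix A assume "A \<in> sets (distr (density (L n) (\<lambda>v. ennreal (indicator {v. Zof v} v))) xtuM XTUof)"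
  then have A [measurable]: "A \<in> sets xtuM" by simp
  interpret Ln: prob_space "L n" by (rule L_prob)
  interpret Q1: prob_space "Q True" by (rule Q_prob)
  have vimage: "XTUof -` A \<in> sets (L n)"
    using measurable_sets[OF measurable_XTUof A] by simp
  have "emeasure (distr (density (L n) (\<lambda>v. ennreal (indicator {v. Zof v} v))) xtuM XTUof) A
      = emeasure (density (L n) (\<lambda>v. ennreal (indicator {v. Zof v} v))) (XTUof -` A)"
    by (subst emeasure_distr) auto
  also have "\<dots> = emeasure (L n) ({v. Zof v} \<inter> XTUof -` A)"
    using vimage by (simp only: ennreal_indicator) (intro emeasure_restricted; simp)
  also have "\<dots> = emeasure (L n) (zevent True A)"
    by (rule arg_cong[where f="emeasure (L n)"]) (auto simp: zevent_def XTUof_def)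
  also have "\<dots> = emeasure (density (Q True) (\<lambda>_. ennreal (p n))) A"
    using L_mix1[OF A, of n] p_bounds(1)[of n]
    by (simp add: Ln.emeasure_eq_measure Q1.emeasure_eq_measure emeasure_density_const ennreal_mult)
  finally show "emeasure (distr (density (L n) (\<lambda>v. ennreal (indicator {v. Zof v} v))) xtuM XTUof) A
      = emeasure (density (Q True) (\<lambda>_. ennreal (p n))) A" .
qed (simp add: Q_sets)

lemma indicator_treated_in_mult:
  fixes f :: "'d obs \<Rightarrow> real"
  shows "indicator (treated_in B) v * f v
    = indicator {v. Zof v} v * (indicator B (fst (XTUof v)) * f (treated_obs (XTUof v)))"
  using treated_obs_XTUof[of v] by (auto simp: treated_in_def indicator_def XTUof_def)

context
  fixes f :: "'d obs \<Rightarrow> real" and B :: "(real^'d) set"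
  assumes f [measurable]: "f \<in> borel_measurable obsM" and B [measurable]: "B \<in> sets borel"
begin

lemma integral_treated_in:
  "(\<integral>v. indicator (treated_in B) v * f v \<partial>L n) = p n * (\<integral>w. indicator B (fst w) * f (treated_obs w) \<partial>Q True)"
proof -
  define \<psi> where "\<psi> w = indicator B (fst w) * f (treated_obs w)" for w
  have [measurable]: "\<psi> \<in> borel_measurable xtuM" unfolding \<psi>_def[abs_def] by measurable
  have "(\<integral>v. indicator (treated_in B) v * f v \<partial>L n) = (\<integral>v. indicator {v. Zof v} v * \<psi> (XTUof v) \<partial>L n)"
    by (simp add: indicator_treated_in_mult \<psi>_def)
  also have "\<dots> = (\<integral>v. \<psi> (XTUof v) \<partial>density (L n) (\<lambda>v. ennreal (indicator {v. Zof v} v)))"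
    by (subst integral_density) auto
  also have "\<dots> = (\<integral>w. \<psi> w \<partial>distr (density (L n) (\<lambda>v. ennreal (indicator {v. Zof v} v))) xtuM XTUof)"
    by (subst integral_distr) auto
  also have "\<dots> = p n * (\<integral>w. \<psi> w \<partial>Q True)"
    using p_bounds(1)[of n] by (simp add: distr_treated_part integral_density)
  finally show ?thesis by (simp add: \<psi>_def)
qed

lemma integrable_treated_in:
  assumes "integrable (Q True) (\<lambda>w. f (treated_obs w))"
  shows "integrable (L n) (\<lambda>v. indicator (treated_in B) v * f v)"
proof -
  define \<psi> where "\<psi> w = indicator B (fst w) * f (treated_obs w)" for w
  have [measurable]: "\<psi> \<in> borel_measurable xtuM" unfolding \<psi>_def[abs_def] by measurable
  have "integrable (Q True) \<psi>"
    unfolding \<psi>_def using integrable_mult_indicator[OF _ assms, of "{w. fst w \<in> B}"]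
    by (simp add: Q_sets indicator_def)
  then have "integrable (density (Q True) (\<lambda>_. ennreal (p n))) \<psi>"
    using p_bounds(1)[of n] by (simp add: integrable_density)
  then have "integrable (density (L n) (\<lambda>v. ennreal (indicator {v. Zof v} v))) (\<lambda>v. \<psi> (XTUof v))"
    by (simp add: distr_treated_part[symmetric] integrable_distr_eq)
  then show ?thesis
    by (simp add: integrable_density indicator_treated_in_mult \<psi>_def)
qed

end

lemma measure_control_in:
  "B \<in> sets borel \<Longrightarrow> measure (L n) (control_in B) = (1 - p n) * measure (Q False) {w. fst w \<in> B}"
  using L_mix0[of "{w. fst w \<in> B}" n] by (simp add: zevent_def control_in_def)

end

section \<open>Matching within the cells of a partition\<close>

locale cell_matching = treatment_mixture L Q p
  for L :: "nat \<Rightarrow> ('d::finite) obs measure"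
    and Q :: "bool \<Rightarrow> ((real^'d) \<times> real \<times> real) measure"
    and p :: "nat \<Rightarrow> real" +
  fixes \<X> :: "(real^'d) set"
    and \<A> :: "nat \<Rightarrow> (real^'d) set set"
    and q :: "nat \<Rightarrow> real"
  assumes partition: "\<And>n. meas_partition (\<A> n) \<X>"
    and np_at_top: "filterlim (\<lambda>n. real n * p n) at_top sequentially"
    and p_tendsto_0: "p \<longlonglongrightarrow> 0"
    and nq_at_top: "filterlim (\<lambda>n. real n * q n) at_top sequentially"
    and cell_mass: "\<And>n a. a \<in> \<A> n \<Longrightarrow> q n \<le> measure (Q False) {w. fst w \<in> a}"
begin

lemma finite_cells: "finite (\<A> n)"
  and sets_cell [measurable]: "a \<in> \<A> n \<Longrightarrow> a \<in> sets borel"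
  and disjoint_cells: "disjoint (\<A> n)"
  and Union_cells: "\<Union>(\<A> n) = \<X>"
  using partition[of n] by (auto simp: meas_partition_def)

lemma sets_\<X> [measurable]: "\<X> \<in> sets borel"
  using finite_cells[of 0] sets_cell[of _ 0] Union_cells[of 0] by (metis sets.finite_Union subsetI)

lemma indicator_\<X>_eq_sum_cells: "indicator \<X> x = (\<Sum>a\<in>\<A> n. indicator a x :: real)"
  using indicator_UN_disjoint[OF finite_cells[of n], of id x] disjoint_cells[of n] Union_cells[of n]
  by (simp add: disjoint_family_on_def disjoint_def)

definition treated_summand :: "('d obs \<Rightarrow> real) \<Rightarrow> 'd obs \<Rightarrow> real" where
  "treated_summand g v = indicator (treated_in \<X>) v * g v"

definition treated_sum :: "('d obs \<Rightarrow> real) \<Rightarrow> nat \<Rightarrow> (nat \<Rightarrow> 'd obs) \<Rightarrow> real" where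
  "treated_sum g n \<omega> = (\<Sum>i\<in>{1..n}. treated_summand g (\<omega> i))"

text \<open>The product is 1 exactly when no other unit is a control in cell \<open>a\<close>, i.e. when a treated
  unit \<open>i\<close> in \<open>a\<close> is left unmatched.\<close>
definition unmatched_bound :: "('d obs \<Rightarrow> real) \<Rightarrow> nat \<Rightarrow> (nat \<Rightarrow> 'd obs) \<Rightarrow> real" where
  "unmatched_bound g n \<omega> = (\<Sum>i\<in>{1..n}. \<Sum>a\<in>\<A> n. indicator (treated_in a) (\<omega> i) * \<bar>g (\<omega> i)\<bar> *
      (\<Prod>k\<in>{1..n} - {i}. 1 - indicator (control_in a) (\<omega> k)))"

lemma unmatched_term_nonneg:
  "0 \<le> indicator (treated_in a) (\<omega> i) * \<bar>g (\<omega> i)\<bar> * (\<Prod>k\<in>K. 1 - indicator (control_in a) (\<omega> k) :: real)"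
  by (intro mult_nonneg_nonneg prod_nonneg) (auto simp: indicator_def)

lemma matched_sum_deviation_le:
  "\<bar>(\<Sum>i\<in>matched_treated (\<A> n) n \<omega>. g (\<omega> i)) - treated_sum g n \<omega>\<bar> \<le> unmatched_bound g n \<omega>"
proof -
  define T where "T = {i\<in>{1..n}. \<omega> i \<in> treated_in \<X>}"
  define M where "M = matched_treated (\<A> n) n \<omega>"
  have "M \<subseteq> T"
    using Union_cells[of n] by (auto simp: M_def T_def matched_treated_def treated_in_def)
  have "treated_sum g n \<omega> = (\<Sum>i\<in>T. g (\<omega> i))"
    by (simp add: treated_sum_def treated_summand_def T_def indicator_def sum.inter_filter if_distrib Int_def)
  also have "\<dots> = (\<Sum>i\<in>M. g (\<omega> i)) + (\<Sum>i\<in>T - M. g (\<omega> i))"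
    using sum.subset_diff[OF \<open>M \<subseteq> T\<close>, of "\<lambda>i. g (\<omega> i)"] by (simp add: T_def)
  finally have "\<bar>(\<Sum>i\<in>M. g (\<omega> i)) - treated_sum g n \<omega>\<bar> \<le> (\<Sum>i\<in>T - M. \<bar>g (\<omega> i)\<bar>)"
    by (simp add: sum_abs)
  also have "\<dots> \<le> (\<Sum>i\<in>T - M. \<Sum>a\<in>\<A> n. indicator (treated_in a) (\<omega> i) * \<bar>g (\<omega> i)\<bar> *
      (\<Prod>k\<in>{1..n} - {i}. 1 - indicator (control_in a) (\<omega> k)))"
  proof (rule sum_mono)
    fix i assume i: "i \<in> T - M"
    then obtain a where a: "a \<in> \<A> n" "Xof (\<omega> i) \<in> a"
      using Union_cells[of n] by (auto simp: T_def treated_in_def)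
    have "\<omega> k \<notin> control_in a" if "k \<in> {1..n}" for k
      using i a that by (auto simp: T_def M_def matched_treated_def treated_in_def control_in_def)
    then have "\<bar>g (\<omega> i)\<bar> = indicator (treated_in a) (\<omega> i) * \<bar>g (\<omega> i)\<bar> *
        (\<Prod>k\<in>{1..n} - {i}. 1 - indicator (control_in a) (\<omega> k))"
      using i a by (auto simp: T_def treated_in_def)
    also have "\<dots> \<le> (\<Sum>a\<in>\<A> n. indicator (treated_in a) (\<omega> i) * \<bar>g (\<omega> i)\<bar> *
        (\<Prod>k\<in>{1..n} - {i}. 1 - indicator (control_in a) (\<omega> k)))"
      by (rule member_le_sum[OF a(1)]) (simp_all add: unmatched_term_nonneg finite_cells)
    finally show "\<bar>g (\<omega> i)\<bar> \<le> \<dots>" .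
  qed
  also have "\<dots> \<le> unmatched_bound g n \<omega>"
    unfolding unmatched_bound_def using unmatched_term_nonneg
    by (intro sum_mono2 sum_nonneg) (auto simp: T_def)
  finally show ?thesis by (simp add: M_def)
qed

lemma sample_space_prob: "prob_space (sample_space n (L n))"
  unfolding sample_space_def by (intro prob_space_PiM L_prob)

definition unmatched_rate :: "nat \<Rightarrow> real" where
  "unmatched_rate n = exp (- (real (n - 1) * ((1 - p n) * q n)))"

lemma unmatched_cell_prob_le:
  assumes "a \<in> \<A> n"
  shows "(1 - (1 - p n) * measure (Q False) {w. fst w \<in> a}) ^ (n - 1) \<le> unmatched_rate n"
proof -
  interpret Q0: prob_space "Q False" by (rule Q_prob)
  have "(1 - p n) * measure (Q False) {w. fst w \<in> a} \<le> 1"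
    using p_bounds[of n] by (intro mult_le_one) (auto simp: Q0.prob_le_1)
  then have "(1 - (1 - p n) * measure (Q False) {w. fst w \<in> a}) ^ (n - 1)
      \<le> exp (- (real (n - 1) * ((1 - p n) * measure (Q False) {w. fst w \<in> a})))"
    by (rule one_minus_power_le_exp)
  also have "\<dots> \<le> unmatched_rate n"
    unfolding unmatched_rate_def using cell_mass[OF assms] p_bounds(2)[of n]
    by (intro exp_mono le_imp_neg_le mult_left_mono) auto
  finally show ?thesis .
qed

lemma eventually_np_pos: "\<forall>\<^sub>F n in sequentially. 0 < real n * p n"
  using np_at_top by (simp add: filterlim_at_top_dense)

lemma inverse_np_tendsto_0: "(\<lambda>n. 1 / (real n * p n)) \<longlonglongrightarrow> 0"
  using tendsto_inverse_0_at_top[OF np_at_top] by (simp add: inverse_eq_divide)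

lemma unmatched_rate_tendsto_0: "unmatched_rate \<longlonglongrightarrow> 0"
proof -
  have "((\<lambda>n. (1 - 1 / real n) * (1 - p n)) \<longlongrightarrow> (1 - 0) * (1 - 0)) sequentially"
    by (intro tendsto_intros lim_1_over_n p_tendsto_0)
  then have lim: "filterlim (\<lambda>n. (1 - 1 / real n) * (1 - p n) * (real n * q n)) at_top sequentially"
    by (intro filterlim_tendsto_pos_mult_at_top[OF _ _ nq_at_top]) auto
  have eq: "\<forall>\<^sub>F n in sequentially.
      (1 - 1 / real n) * (1 - p n) * (real n * q n) = real (n - 1) * ((1 - p n) * q n)"
    using eventually_ge_at_top[of "1::nat"] by eventually_elim (simp add: of_nat_diff field_simps)
  have "filterlim (\<lambda>n. real (n - 1) * ((1 - p n) * q n)) at_top sequentially"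
    by (rule filterlim_at_top_mono[OF lim eventually_mono[OF eq]]) (erule eq_refl)
  then show ?thesis
    unfolding unmatched_rate_def
    by (intro filterlim_compose[OF exp_at_bot]) (simp add: filterlim_uminus_at_bot)
qed

context
  fixes g :: "'d obs \<Rightarrow> real"
  assumes g_meas [measurable]: "g \<in> borel_measurable obsM"
    and g_L2: "integrable (Q True) (\<lambda>w. (g (treated_obs w))\<^sup>2)"
begin

lemma g_L1: "integrable (Q True) (\<lambda>w. g (treated_obs w))"
proof -
  have "(\<lambda>w. g (treated_obs w)) \<in> borel_measurable (Q True)"
    unfolding measurable_cong_sets[OF Q_sets refl]
    using measurable_compose[OF measurable_treated_obs g_meas] .
  then show ?thesis
    using finite_measure.square_integrable_imp_integrable[OF prob_space.finite_measure[OF Q_prob] _ g_L2]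
    by blast
qed

lemma
  assumes "a \<in> \<A> n" and "i \<in> {1..n}"
  shows integrable_unmatched_term: "integrable (sample_space n (L n)) (\<lambda>\<omega>.
      indicator (treated_in a) (\<omega> i) * \<bar>g (\<omega> i)\<bar> * (\<Prod>k\<in>{1..n} - {i}. 1 - indicator (control_in a) (\<omega> k)))"
    and integral_unmatched_term: "(\<integral>\<omega>. indicator (treated_in a) (\<omega> i) * \<bar>g (\<omega> i)\<bar> *
      (\<Prod>k\<in>{1..n} - {i}. 1 - indicator (control_in a) (\<omega> k)) \<partial>sample_space n (L n))
    = p n * (\<integral>w. indicator a (fst w) * \<bar>g (treated_obs w)\<bar> \<partial>Q True)
        * (1 - (1 - p n) * measure (Q False) {w. fst w \<in> a}) ^ (n - 1)"
proof -
  interpret Ln: prob_space "L n" by (rule L_prob)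
  have [measurable]: "a \<in> sets borel" using assms(1) by (rule sets_cell)
  define F where "F k = (if k = i then (\<lambda>v. indicator (treated_in a) v * \<bar>g v\<bar>)
      else (\<lambda>v. 1 - indicator (control_in a) v))" for k
  have F: "integrable (L n) (F k)" for k
    using integrable_treated_in[of "\<lambda>v. \<bar>g v\<bar>" a n] g_L1
    by (auto simp: F_def Ln.emeasure_eq_measure)
  have control: "integral\<^sup>L (L n) (\<lambda>v. 1 - indicator (control_in a) v) = 1 - measure (L n) (control_in a)"
    by (rule Ln.integral_one_minus_indicator) (simp add: L_sets)
  have prod_F: "(\<Prod>k\<in>{1..n}. F k (\<omega> k)) = indicator (treated_in a) (\<omega> i) * \<bar>g (\<omega> i)\<bar> *
      (\<Prod>k\<in>{1..n} - {i}. 1 - indicator (control_in a) (\<omega> k))" for \<omega>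
    using assms(2) by (subst prod.remove[of "{1..n}" i]) (auto simp: F_def)
  have "(\<Prod>k\<in>{1..n}. integral\<^sup>L (L n) (F k))
      = integral\<^sup>L (L n) (F i) * (\<Prod>k\<in>{1..n} - {i}. 1 - measure (L n) (control_in a))"
    using assms(2) by (subst prod.remove[of "{1..n}" i]) (auto simp: F_def control)
  also have "\<dots> = p n * (\<integral>w. indicator a (fst w) * \<bar>g (treated_obs w)\<bar> \<partial>Q True)
      * (1 - (1 - p n) * measure (Q False) {w. fst w \<in> a}) ^ (n - 1)"
    using assms(2) integral_treated_in[of "\<lambda>v. \<bar>g v\<bar>" a n] measure_control_in[of a n] by (simp add: F_def)
  finally show "(\<integral>\<omega>. indicator (treated_in a) (\<omega> i) * \<bar>g (\<omega> i)\<bar> *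
      (\<Prod>k\<in>{1..n} - {i}. 1 - indicator (control_in a) (\<omega> k)) \<partial>sample_space n (L n))
    = p n * (\<integral>w. indicator a (fst w) * \<bar>g (treated_obs w)\<bar> \<partial>Q True)
        * (1 - (1 - p n) * measure (Q False) {w. fst w \<in> a}) ^ (n - 1)"
    using integral_PiM_prod_components[of "L n" "{1..n}" "{1..n}" F] F L_prob
    unfolding prod_F[symmetric] sample_space_def by simp
  show "integrable (sample_space n (L n)) (\<lambda>\<omega>.
      indicator (treated_in a) (\<omega> i) * \<bar>g (\<omega> i)\<bar> * (\<Prod>k\<in>{1..n} - {i}. 1 - indicator (control_in a) (\<omega> k)))"
    using integrable_PiM_prod_components[of "L n" "{1..n}" "{1..n}" F] F L_prob
    unfolding prod_F[symmetric] sample_space_def by simp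
qed

lemma integrable_unmatched_bound: "integrable (sample_space n (L n)) (unmatched_bound g n)"
  unfolding unmatched_bound_def[abs_def]
  using integrable_unmatched_term
  by (intro Bochner_Integration.integrable_sum) auto

lemma integral_unmatched_bound_le:
  "(\<integral>\<omega>. unmatched_bound g n \<omega> \<partial>sample_space n (L n))
     \<le> real n * p n * (\<integral>w. indicator \<X> (fst w) * \<bar>g (treated_obs w)\<bar> \<partial>Q True) * unmatched_rate n"
proof -
  define I where "I a = (\<integral>w. indicator a (fst w) * \<bar>g (treated_obs w)\<bar> \<partial>Q True)" for a
  have I_int: "integrable (Q True) (\<lambda>w. indicator a (fst w) * \<bar>g (treated_obs w)\<bar>)" if "a \<in> \<A> n" for a
  proof -
    have "{w. fst w \<in> a} \<in> sets (Q True)"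
      using sets_fst_vimage[OF sets_cell[OF that]] by (simp add: Q_sets)
    from integrable_mult_indicator[OF this integrable_abs[OF g_L1]]
    show ?thesis by (simp add: indicator_def)
  qed
  have "(\<integral>\<omega>. unmatched_bound g n \<omega> \<partial>sample_space n (L n))
      = (\<Sum>i\<in>{1..n}. \<Sum>a\<in>\<A> n. p n * I a * (1 - (1 - p n) * measure (Q False) {w. fst w \<in> a}) ^ (n - 1))"
    unfolding unmatched_bound_def[abs_def] I_def
    using integrable_unmatched_term integral_unmatched_term
    by (simp add: Bochner_Integration.integral_sum Bochner_Integration.integrable_sum)
  also have "\<dots> \<le> (\<Sum>i\<in>{1..n}. \<Sum>a\<in>\<A> n. p n * I a * unmatched_rate n)"
    using unmatched_cell_prob_le p_bounds(1)[of n]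
    by (intro sum_mono mult_left_mono) (auto simp: I_def)
  also have "\<dots> = real n * p n * (\<Sum>a\<in>\<A> n. I a) * unmatched_rate n"
    by (simp add: sum_distrib_left sum_distrib_right mult_ac)
  also have "(\<Sum>a\<in>\<A> n. I a) = (\<integral>w. indicator \<X> (fst w) * \<bar>g (treated_obs w)\<bar> \<partial>Q True)"
    unfolding I_def indicator_\<X>_eq_sum_cells[of _ n] sum_distrib_right
    using I_int by (simp add: Bochner_Integration.integral_sum)
  finally show ?thesis .
qed

lemma measurable_treated_summand: "treated_summand g \<in> borel_measurable (L n)"
  unfolding treated_summand_def[abs_def] measurable_cong_sets[OF L_sets refl] by measurable

lemma integral_treated_summand:
  "integral\<^sup>L (L n) (treated_summand g) = p n * (\<integral>w. indicator \<X> (fst w) * g (treated_obs w) \<partial>Q True)"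
  unfolding treated_summand_def[abs_def] by (rule integral_treated_in) auto

lemma treated_summand_square: "(treated_summand g v)\<^sup>2 = indicator (treated_in \<X>) v * (g v)\<^sup>2"
  by (simp add: treated_summand_def indicator_def)

lemma integrable_treated_summand_square: "integrable (L n) (\<lambda>v. (treated_summand g v)\<^sup>2)"
  unfolding treated_summand_square using g_L2 by (intro integrable_treated_in) auto

lemma integral_treated_summand_square:
  "(\<integral>v. (treated_summand g v)\<^sup>2 \<partial>L n) = p n * (\<integral>w. indicator \<X> (fst w) * (g (treated_obs w))\<^sup>2 \<partial>Q True)"
  unfolding treated_summand_square by (rule integral_treated_in) auto

lemma treated_sum_deviation_le:
  assumes "0 < \<epsilon>" "0 < real n * p n"
  shows "measure (sample_space n (L n)) {\<omega>\<in>space (sample_space n (L n)).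
      \<epsilon> < \<bar>1 / (real n * p n) * treated_sum g n \<omega> - (\<integral>w. indicator \<X> (fst w) * g (treated_obs w) \<partial>Q True)\<bar>}
    \<le> (\<integral>w. indicator \<X> (fst w) * (g (treated_obs w))\<^sup>2 \<partial>Q True) / \<epsilon>\<^sup>2 * (1 / (real n * p n))"
proof -
  define \<mu> where "\<mu> = (\<integral>w. indicator \<X> (fst w) * g (treated_obs w) \<partial>Q True)"
  define P where "P = sample_space n (L n)"
  define D where "D \<omega> = \<bar>treated_sum g n \<omega> - real (card {1..n}) * integral\<^sup>L (L n) (treated_summand g)\<bar>" for \<omega>
  have "1 / x * S - \<mu> = (S - x * \<mu>) / x" if "0 < x" for S x :: real
    using that by (simp add: field_simps)
  then have "\<bar>1 / (real n * p n) * treated_sum g n \<omega> - \<mu>\<bar> = D \<omega> / (real n * p n)" for \<omega>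
    using assms(2) by (simp add: D_def integral_treated_summand \<mu>_def mult.assoc)
  then have sub: "{\<omega>\<in>space P. \<epsilon> < \<bar>1 / (real n * p n) * treated_sum g n \<omega> - \<mu>\<bar>}
      \<subseteq> {\<omega>\<in>space P. \<epsilon> * (real n * p n) \<le> D \<omega>}"
    using assms(2) by (auto simp: pos_less_divide_eq)
  have [measurable]: "treated_summand g \<in> borel_measurable (L n)"
    by (rule measurable_treated_summand)
  have "measure P {\<omega>\<in>space P. \<epsilon> < \<bar>1 / (real n * p n) * treated_sum g n \<omega> - \<mu>\<bar>}
      \<le> measure P {\<omega>\<in>space P. \<epsilon> * (real n * p n) \<le> D \<omega>}"
    by (rule finite_measure.finite_measure_mono[OF prob_space.finite_measure sub])
      (simp_all add: P_def D_def treated_sum_def[abs_def] sample_space_def prob_space_PiM L_prob)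
  also have "\<dots> \<le> real (card {1..n}) * (\<integral>v. (treated_summand g v)\<^sup>2 \<partial>L n) / (\<epsilon> * (real n * p n))\<^sup>2"
    unfolding P_def sample_space_def D_def treated_sum_def using assms
    by (intro iid_sum_deviation_le L_prob integrable_treated_summand_square) auto
  also have "\<dots> = (\<integral>w. indicator \<X> (fst w) * (g (treated_obs w))\<^sup>2 \<partial>Q True) / \<epsilon>\<^sup>2 * (1 / (real n * p n))"
    unfolding integral_treated_summand_square using assms by (simp add: power2_eq_square field_simps)
  finally show ?thesis by (simp add: P_def \<mu>_def)
qed

lemma unmatched_bound_deviation_le:
  assumes "0 < \<epsilon>" "0 < real n * p n"
  shows "measure (sample_space n (L n)) {\<omega>\<in>space (sample_space n (L n)).
      \<epsilon> < \<bar>1 / (real n * p n) * unmatched_bound g n \<omega> - 0\<bar>}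
    \<le> (\<integral>w. indicator \<X> (fst w) * \<bar>g (treated_obs w)\<bar> \<partial>Q True) / \<epsilon> * unmatched_rate n"
proof -
  define P where "P = sample_space n (L n)"
  have nonneg: "0 \<le> unmatched_bound g n \<omega>" for \<omega>
    unfolding unmatched_bound_def by (intro sum_nonneg unmatched_term_nonneg)
  have sub: "{\<omega>\<in>space P. \<epsilon> < \<bar>1 / (real n * p n) * unmatched_bound g n \<omega> - 0\<bar>}
      \<subseteq> {\<omega>\<in>space P. \<epsilon> * (real n * p n) \<le> unmatched_bound g n \<omega>}"
    using assms(2) nonneg by (auto simp: pos_less_divide_eq)
  have "measure P {\<omega>\<in>space P. \<epsilon> < \<bar>1 / (real n * p n) * unmatched_bound g n \<omega> - 0\<bar>}
      \<le> measure P {\<omega>\<in>space P. \<epsilon> * (real n * p n) \<le> unmatched_bound g n \<omega>}"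
  proof (rule finite_measure.finite_measure_mono[OF prob_space.finite_measure sub])
    have "unmatched_bound g n \<in> borel_measurable P"
      unfolding P_def using integrable_unmatched_bound by (rule borel_measurable_integrable)
    then show "{\<omega>\<in>space P. \<epsilon> * (real n * p n) \<le> unmatched_bound g n \<omega>} \<in> sets P"
      by measurable
  qed (simp_all add: P_def sample_space_prob)
  also have "\<dots> \<le> (\<integral>\<omega>. unmatched_bound g n \<omega> \<partial>P) / (\<epsilon> * (real n * p n))"
    unfolding P_def using assms integrable_unmatched_bound nonneg
    by (intro integral_Markov_inequality_measure[OF _ sets.top]) auto
  also have "\<dots> \<le> real n * p n * (\<integral>w. indicator \<X> (fst w) * \<bar>g (treated_obs w)\<bar> \<partial>Q True)
      * unmatched_rate n / (\<epsilon> * (real n * p n))"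
    unfolding P_def using assms integral_unmatched_bound_le
    by (intro divide_right_mono) auto
  also have "\<dots> = (\<integral>w. indicator \<X> (fst w) * \<bar>g (treated_obs w)\<bar> \<partial>Q True) / \<epsilon> * unmatched_rate n"
  proof -
    have "real n \<noteq> 0" "p n \<noteq> 0" using assms(2) by (auto intro!: gr0I)
    with assms(1) show ?thesis by (simp add: field_simps)
  qed
  finally show ?thesis by (simp add: P_def)
qed

lemma measurable_treated_sum: "treated_sum g n \<in> borel_measurable (sample_space n (L n))"
  using measurable_treated_summand unfolding treated_sum_def[abs_def] sample_space_def by measurable

lemma conv_prob_outer_treated_sum:
  "conv_prob_outer (\<lambda>n. sample_space n (L n)) (\<lambda>n \<omega>. 1 / (real n * p n) * treated_sum g n \<omega>)
     (\<integral>w. indicator \<X> (fst w) * g (treated_obs w) \<partial>Q True)"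
proof (rule conv_prob_outer_of_measure_bound)
  show "(\<lambda>\<omega>. 1 / (real n * p n) * treated_sum g n \<omega>) \<in> borel_measurable (sample_space n (L n))" for n
    using measurable_treated_sum by measurable
  fix \<epsilon> :: real assume "0 < \<epsilon>"
  show "\<exists>b. b \<longlonglongrightarrow> 0 \<and> (\<forall>\<^sub>F n in sequentially. measure (sample_space n (L n))
      {\<omega>\<in>space (sample_space n (L n)). \<epsilon> < \<bar>1 / (real n * p n) * treated_sum g n \<omega>
         - (\<integral>w. indicator \<X> (fst w) * g (treated_obs w) \<partial>Q True)\<bar>} \<le> b n)"
  proof (intro exI conjI)
    show "(\<lambda>n. (\<integral>w. indicator \<X> (fst w) * (g (treated_obs w))\<^sup>2 \<partial>Q True) / \<epsilon>\<^sup>2 * (1 / (real n * p n)))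
        \<longlonglongrightarrow> 0"
      by (rule tendsto_mult_right_zero[OF inverse_np_tendsto_0])
    show "\<forall>\<^sub>F n in sequentially. measure (sample_space n (L n))
      {\<omega>\<in>space (sample_space n (L n)). \<epsilon> < \<bar>1 / (real n * p n) * treated_sum g n \<omega>
         - (\<integral>w. indicator \<X> (fst w) * g (treated_obs w) \<partial>Q True)\<bar>}
      \<le> (\<integral>w. indicator \<X> (fst w) * (g (treated_obs w))\<^sup>2 \<partial>Q True) / \<epsilon>\<^sup>2 * (1 / (real n * p n))"
      using eventually_np_pos by eventually_elim (rule treated_sum_deviation_le[OF \<open>0 < \<epsilon>\<close>])
  qed
qed

lemma conv_prob_outer_unmatched_bound:
  "conv_prob_outer (\<lambda>n. sample_space n (L n)) (\<lambda>n \<omega>. 1 / (real n * p n) * unmatched_bound g n \<omega>) 0"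
proof (rule conv_prob_outer_of_measure_bound)
  show "(\<lambda>\<omega>. 1 / (real n * p n) * unmatched_bound g n \<omega>) \<in> borel_measurable (sample_space n (L n))" for n
    using borel_measurable_integrable[OF integrable_unmatched_bound] by measurable
  fix \<epsilon> :: real assume "0 < \<epsilon>"
  show "\<exists>b. b \<longlonglongrightarrow> 0 \<and> (\<forall>\<^sub>F n in sequentially. measure (sample_space n (L n))
      {\<omega>\<in>space (sample_space n (L n)). \<epsilon> < \<bar>1 / (real n * p n) * unmatched_bound g n \<omega> - 0\<bar>} \<le> b n)"
  proof (intro exI conjI)
    show "(\<lambda>n. (\<integral>w. indicator \<X> (fst w) * \<bar>g (treated_obs w)\<bar> \<partial>Q True) / \<epsilon> * unmatched_rate n) \<longlonglongrightarrow> 0"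
      by (rule tendsto_mult_right_zero[OF unmatched_rate_tendsto_0])
    show "\<forall>\<^sub>F n in sequentially. measure (sample_space n (L n))
      {\<omega>\<in>space (sample_space n (L n)). \<epsilon> < \<bar>1 / (real n * p n) * unmatched_bound g n \<omega> - 0\<bar>}
      \<le> (\<integral>w. indicator \<X> (fst w) * \<bar>g (treated_obs w)\<bar> \<partial>Q True) / \<epsilon> * unmatched_rate n"
      using eventually_np_pos by eventually_elim (rule unmatched_bound_deviation_le[OF \<open>0 < \<epsilon>\<close>])
  qed
qed

lemma conv_prob_outer_matched_sum:
  "conv_prob_outer (\<lambda>n. sample_space n (L n))
     (\<lambda>n \<omega>. 1 / (real n * p n) * (\<Sum>i\<in>matched_treated (\<A> n) n \<omega>. g (\<omega> i)))
     (\<integral>w. indicator \<X> (fst w) * g (treated_obs w) \<partial>Q True)"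
proof (rule conv_prob_outer_perturb[OF conv_prob_outer_treated_sum conv_prob_outer_unmatched_bound])
  show "\<forall>\<^sub>F n in sequentially. \<forall>\<omega>\<in>space (sample_space n (L n)).
      \<bar>1 / (real n * p n) * (\<Sum>i\<in>matched_treated (\<A> n) n \<omega>. g (\<omega> i)) - 1 / (real n * p n) * treated_sum g n \<omega>\<bar>
        \<le> 1 / (real n * p n) * unmatched_bound g n \<omega>"
    using eventually_np_pos
  proof eventually_elim
    case (elim n)
    show ?case
    proof
      fix \<omega>
      have "\<bar>1 / (real n * p n) * (\<Sum>i\<in>matched_treated (\<A> n) n \<omega>. g (\<omega> i)) - 1 / (real n * p n) * treated_sum g n \<omega>\<bar>
          = 1 / (real n * p n) * \<bar>(\<Sum>i\<in>matched_treated (\<A> n) n \<omega>. g (\<omega> i)) - treated_sum g n \<omega>\<bar>"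
        unfolding right_diff_distrib[symmetric] abs_mult using elim by simp
      also have "\<dots> \<le> 1 / (real n * p n) * unmatched_bound g n \<omega>"
        using elim by (intro mult_left_mono matched_sum_deviation_le) auto
      finally show "\<bar>1 / (real n * p n) * (\<Sum>i\<in>matched_treated (\<A> n) n \<omega>. g (\<omega> i)) - 1 / (real n * p n) * treated_sum g n \<omega>\<bar>
          \<le> 1 / (real n * p n) * unmatched_bound g n \<omega>" .
    qed
  qed
qed

end

lemma matched_estimators_consistent:
  fixes g :: "'d obs \<Rightarrow> real"
  assumes g_meas [measurable]: "g \<in> borel_measurable obsM"
    and g_L2: "integrable (Q True) (\<lambda>w. (g (treated_obs w))\<^sup>2)"
    and pos: "0 < measure (Q True) {w. fst w \<in> \<X>}"
  defines "\<mu> \<equiv> \<integral>w. indicator \<X> (fst w) * g (treated_obs w) \<partial>Q True"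
  shows "conv_prob (\<lambda>n. sample_space n (L n))
       (\<lambda>n \<omega>. 1 / (real n * p n) * (\<Sum>i\<in>matched_treated (\<A> n) n \<omega>. g (\<omega> i))) \<mu>" (is ?mean)
    and "conv_prob (\<lambda>n. sample_space n (L n))
       (\<lambda>n \<omega>. pinv (real (card (matched_treated (\<A> n) n \<omega>))) * (\<Sum>i\<in>matched_treated (\<A> n) n \<omega>. g (\<omega> i)))
       (\<mu> / measure (Q True) {w. fst w \<in> \<X>})" (is ?ratio)
    and "conv_prob (\<lambda>n. sample_space n (L n))
       (\<lambda>n \<omega>. real (card (matched_treated (\<A> n) n \<omega>)) / (real n * p n)) (measure (Q True) {w. fst w \<in> \<X>})"
      (is ?count)
proof -
  have fin: "finite_measure (sample_space n (L n))" for n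
    by (rule prob_space.finite_measure[OF sample_space_prob])
  have sum: "conv_prob_outer (\<lambda>n. sample_space n (L n))
      (\<lambda>n \<omega>. 1 / (real n * p n) * (\<Sum>i\<in>matched_treated (\<A> n) n \<omega>. g (\<omega> i))) \<mu>"
    unfolding \<mu>_def by (rule conv_prob_outer_matched_sum[OF g_meas g_L2])
  have "(\<integral>w. indicator \<X> (fst w) * 1 \<partial>Q True) = measure (Q True) {w. fst w \<in> \<X>}"
  proof -
    have eq: "(\<lambda>w. indicator \<X> (fst w) * 1) = (indicator {w. fst w \<in> \<X>} :: _ \<Rightarrow> real)"
      by (auto simp: indicator_def)
    show ?thesis unfolding eq by simp
  qed
  then have count: "conv_prob_outer (\<lambda>n. sample_space n (L n))
      (\<lambda>n \<omega>. real (card (matched_treated (\<A> n) n \<omega>)) / (real n * p n)) (measure (Q True) {w. fst w \<in> \<X>})"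
    using conv_prob_outer_matched_sum[of "\<lambda>_. 1", OF _ finite_measure.integrable_const[OF prob_space.finite_measure[OF Q_prob]]]
    by simp
  have "conv_prob_outer (\<lambda>n. sample_space n (L n))
      (\<lambda>n \<omega>. pinv (real (card (matched_treated (\<A> n) n \<omega>))) * (\<Sum>i\<in>matched_treated (\<A> n) n \<omega>. g (\<omega> i)))
      (\<mu> / measure (Q True) {w. fst w \<in> \<X>})"
  proof (rule conv_prob_outer_cong[OF conv_prob_outer_divide[OF sum count pos]])
    show "\<forall>\<^sub>F n in sequentially. \<forall>\<omega>\<in>space (sample_space n (L n)).
        pinv (real (card (matched_treated (\<A> n) n \<omega>))) * (\<Sum>i\<in>matched_treated (\<A> n) n \<omega>. g (\<omega> i))
      = 1 / (real n * p n) * (\<Sum>i\<in>matched_treated (\<A> n) n \<omega>. g (\<omega> i))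
        / (real (card (matched_treated (\<A> n) n \<omega>)) / (real n * p n))"
      using eventually_np_pos by eventually_elim (auto simp: pinv_def)
  qed
  with sum count show ?mean ?ratio ?count
    by (simp_all add: conv_prob_outer_imp_conv_prob[OF fin])
qed

end

lemma AE_lower_of_lower_mult:
  fixes f m :: "'a \<Rightarrow> real"
  assumes "AE x in \<nu>. x \<in> S \<longrightarrow> c \<le> f x * m x" "\<And>x. 0 \<le> f x" "\<And>x. 0 \<le> m x \<and> m x \<le> 1"
  shows "AE x in \<nu>. x \<in> S \<longrightarrow> c \<le> f x"
proof -
  have "f x * m x \<le> f x" for x
    using assms(2,3)[of x] by (simp add: mult_left_le)
  with assms(1) show ?thesis
    by (auto elim!: eventually_mono intro: order_trans)
qed

lemma cell_matching_of_rates: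
  fixes \<nu> :: "(real^'d::finite) measure"
  assumes "treatment_mixture L Q p"
    and partition: "\<And>n. meas_partition (\<A> n) \<X>"
    and "0 < \<beta>" "\<beta> < 1" "t < 1"
    and p_rate: "\<exists>c C. 0 < c \<and> (\<forall>n\<ge>1. c * real n powr (\<beta> - 1) \<le> p n \<and> p n \<le> C * real n powr (\<beta> - 1))"
    and \<nu>: "sets \<nu> = sets borel" and f: "f \<in> borel_measurable borel"
    and dens: "distr (Q False) borel fst = density \<nu> (\<lambda>x. ennreal (f x))"
    and f_lower: "\<exists>c>0. AE x in \<nu>. x \<in> \<X> \<longrightarrow> c \<le> f x"
    and vol: "\<exists>c>0. \<forall>n\<ge>1. \<forall>a\<in>\<A> n. c * real n powr (- t) \<le> measure \<nu> a"
  shows "\<exists>q. cell_matching L Q p \<X> \<A> q"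
proof -
  interpret treatment_mixture L Q p by fact
  obtain c C where "0 < c" and p_rate_bounds: "\<And>n. 1 \<le> n \<Longrightarrow> c * real n powr (\<beta> - 1) \<le> p n \<and> p n \<le> C * real n powr (\<beta> - 1)"
    using p_rate by blast
  obtain \<kappa> where "0 < \<kappa>" and \<kappa>: "AE x in \<nu>. x \<in> \<X> \<longrightarrow> \<kappa> \<le> f x" using f_lower by blast
  obtain v where "0 < v" and v: "\<And>n a. 1 \<le> n \<Longrightarrow> a \<in> \<A> n \<Longrightarrow> v * real n powr (- t) \<le> measure \<nu> a"
    using vol by blast
  have cell: "\<kappa> * v * real n powr (- t) \<le> measure (Q False) {w. fst w \<in> a}" if "a \<in> \<A> n" for n a
  proof (cases "n = 0")
    case False
    have a: "a \<in> sets borel" "a \<subseteq> \<X>" using partition[of n] that by (auto simp: meas_partition_def)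
    have "\<kappa> * (v * real n powr (- t)) \<le> \<kappa> * measure \<nu> a"
      using v[OF _ that] False \<open>0 < \<kappa>\<close> by simp
    also have "\<dots> \<le> measure (Q False) (fst -` a \<inter> space (Q False))"
      using \<kappa> a \<open>0 < \<kappa>\<close>
      by (intro measure_vimage_ge_of_density_lower[OF prob_space.finite_measure[OF Q_prob] _ dens f \<nu>])
        (auto simp: measurable_cong_sets[OF Q_sets refl] elim!: eventually_mono)
    finally show ?thesis by (simp add: vimage_def mult.assoc)
  qed simp
  have p_ev: "\<forall>\<^sub>F n in sequentially. c * real n powr (\<beta> - 1) \<le> p n \<and> p n \<le> C * real n powr (\<beta> - 1)"
    using eventually_ge_at_top[of "1::nat"] by eventually_elim (rule p_rate_bounds)
  have "cell_matching L Q p \<X> \<A> (\<lambda>n. \<kappa> * v * real n powr (- t))"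
  proof unfold_locales
    show "filterlim (\<lambda>n. real n * p n) at_top sequentially"
      using \<open>0 < c\<close> \<open>0 < \<beta>\<close> eventually_mono[OF p_ev]
      by (intro mult_at_top_of_powr_lower[of c \<beta>]) auto
    show "p \<longlonglongrightarrow> 0"
      using \<open>\<beta> < 1\<close> p_ev p_bounds(1)
      by (intro tendsto_0_of_powr_upper[of \<beta> _ C]) (auto elim!: eventually_mono)
    show "filterlim (\<lambda>n. real n * (\<kappa> * v * real n powr (- t))) at_top sequentially"
      using \<open>0 < \<kappa>\<close> \<open>0 < v\<close> \<open>t < 1\<close> by (intro mult_at_top_of_powr_lower[of "\<kappa> * v" "1 - t"]) auto
  qed (use partition cell in auto)
  then show ?thesis by blast
qed

theorem mainTheorem14:
  fixes L :: "nat \<Rightarrow> ('d::finite) obs measure"    \<comment> \<open>law of V^i for sample size n\<close>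
    and Q :: "bool \<Rightarrow> ((real^'d) \<times> real \<times> real) measure"  \<comment> \<open>law of (X,T,U) given Z = z\<close>
    and p :: "nat \<Rightarrow> real"                 \<comment> \<open>P(Z^1 = 1) for sample size n\<close>
    and \<nu> :: "(real^'d) measure"
    and f :: "bool \<Rightarrow> real^'d \<Rightarrow> real"     \<comment> \<open>densities f(. | z)\<close>
    and m :: "real^'d \<Rightarrow> real"              \<comment> \<open>a version of E[Y_tau | X = x, Z = 0]\<close>
    and \<X> :: "(real^'d) set"
    and \<A> :: "nat \<Rightarrow> (real^'d) set set"
    and g :: "'d obs \<Rightarrow> real"
    and \<tau> \<beta> \<theta> :: real and dbar :: nat
  assumes
    \<comment> \<open>setting\<close>
    Q_prob: "\<And>z. prob_space (Q z)" and Q_sets: "\<And>z. sets (Q z) = sets xtuM"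
    and Q_pos: "\<And>z. AE w in Q z. 0 < fst (snd w) \<and> 0 < snd (snd w)"
    and L_prob: "\<And>n. prob_space (L n)" and L_sets: "\<And>n. sets (L n) = sets obsM"
    and L_mix1: "\<And>n A. A \<in> sets xtuM \<Longrightarrow> measure (L n) (zevent True A) = p n * measure (Q True) A"
    and L_mix0: "\<And>n A. A \<in> sets xtuM \<Longrightarrow> measure (L n) (zevent False A) = (1 - p n) * measure (Q False) A"
    and tau_pos: "0 < \<tau>"
    and X_compact: "compact \<X>"
    and A_part: "\<And>n. meas_partition (\<A> n) \<X>"
    \<comment> \<open>[B1]\<close>
    and B1: "0 < \<beta>" "\<beta> < 1" "0 < \<theta>" "\<theta> < 1" "1 \<le> dbar" "dbar \<le> CARD('d)"
            "\<beta> < 2 * \<theta>" "real dbar * \<theta> < 1"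
    \<comment> \<open>[B2]\<close>
    and B2: "\<exists>c C. 0 < c \<and> (\<forall>n\<ge>1. c * real n powr (\<beta> - 1) \<le> p n \<and> p n \<le> C * real n powr (\<beta> - 1))"
    \<comment> \<open>[B3]\<close>
    and nu_sets: "sets \<nu> = sets borel" and nu_sf: "sigma_finite_measure \<nu>"
    and nu_X: "emeasure \<nu> \<X> < \<infinity>"
    and f_meas: "\<And>z. f z \<in> borel_measurable borel" and f_nonneg: "\<And>z x. 0 \<le> f z x"
    and f_dens: "\<And>z. distr (Q z) borel fst = density \<nu> (\<lambda>x. ennreal (f z x))"
    and f1_esssup: "\<exists>M. AE x in \<nu>. x \<in> \<X> \<longrightarrow> f True x \<le> M"
    and m_meas: "m \<in> borel_measurable borel" and m_range: "\<And>x. 0 \<le> m x \<and> m x \<le> 1"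
    and m_condexp: "\<And>B. B \<in> sets borel \<Longrightarrow>
          measure (Q False) {w. fst w \<in> B \<and> \<tau> \<le> min (fst (snd w)) (snd (snd w))}
            = (LINT x:B|distr (Q False) borel fst. m x)"
    and f0m_essinf: "\<exists>c>0. AE x in \<nu>. x \<in> \<X> \<longrightarrow> c \<le> f False x * m x"
    \<comment> \<open>[B4]\<close>
    and B4_atom: "\<And>s. 0 \<le> s \<Longrightarrow> s \<le> \<tau> \<Longrightarrow>
          measure (Q True) {w. min (fst (snd w)) (snd (snd w)) = s \<and> fst w \<in> \<X>} = 0"
    and B4_pos: "measure (Q True) {w. \<tau> \<le> min (fst (snd w)) (snd (snd w)) \<and> fst w \<in> \<X>} > 0"
    \<comment> \<open>[B5]\<close>
    and B5_diam: "\<exists>C. \<forall>n\<ge>1. \<forall>a\<in>\<A> n. diameter a \<le> C * real n powr (- \<theta>)"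
    and B5_vol: "\<exists>c C. 0 < c \<and> (\<forall>n\<ge>1. \<forall>a\<in>\<A> n.
          c * real n powr (- (real dbar * \<theta>)) \<le> measure \<nu> a \<and>
          measure \<nu> a \<le> C * real n powr (- (real dbar * \<theta>)))"
    \<comment> \<open>the function g\<close>
    and g_meas: "g \<in> borel_measurable obsM"
    and g_L2: "integrable (Q True) (\<lambda>w. (g (fst w, True, snd w))\<^sup>2)"
  shows
    "conv_prob (\<lambda>n. sample_space n (L n))
       (\<lambda>n \<omega>. (1 / (real n * p n)) * (\<Sum>i\<in>matched_treated (\<A> n) n \<omega>. g (\<omega> i)))
       (\<integral>w. g (fst w, True, snd w) * indicator \<X> (fst w) \<partial>Q True)
     \<and> conv_prob (\<lambda>n. sample_space n (L n))
       (\<lambda>n \<omega>. pinv (real (card (matched_treated (\<A> n) n \<omega>))) *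
                (\<Sum>i\<in>matched_treated (\<A> n) n \<omega>. g (\<omega> i)))
       ((\<integral>w. g (fst w, True, snd w) * indicator \<X> (fst w) \<partial>Q True)
          / measure (Q True) {w. fst w \<in> \<X>})
     \<and> conv_prob (\<lambda>n. sample_space n (L n))
       (\<lambda>n \<omega>. real (card (matched_treated (\<A> n) n \<omega>)) / (real n * p n))
       (measure (Q True) {w. fst w \<in> \<X>})
     \<and> measure (Q True) {w. fst w \<in> \<X>} > 0"
proof -
  interpret treatment_mixture L Q p
    by (rule treatment_mixture.intro) (fact Q_prob Q_sets L_prob L_sets L_mix1 L_mix0)+
  have f0_lower: "\<exists>c>0. AE x in \<nu>. x \<in> \<X> \<longrightarrow> c \<le> f False x"
    using f0m_essinf AE_lower_of_lower_mult[where \<nu>=\<nu> and S=\<X> and f="f False" and m=m] f_nonneg m_range by meson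
  obtain q where "cell_matching L Q p \<X> \<A> q"
    using cell_matching_of_rates[OF treatment_mixture_axioms A_part B1(1,2) B1(8) B2 nu_sets f_meas
        f_dens f0_lower] B5_vol by fastforce
  then interpret cell_matching L Q p \<X> \<A> q .
  have pos: "0 < measure (Q True) {w. fst w \<in> \<X>}"
    by (rule less_le_trans[OF B4_pos finite_measure.finite_measure_mono[OF prob_space.finite_measure[OF Q_prob]]])
      (auto simp: Q_sets)
  have "integrable (Q True) (\<lambda>w. (g (treated_obs w))\<^sup>2)"
    using g_L2 by (simp add: treated_obs_def)
  moreover have "(\<integral>w. g (fst w, True, snd w) * indicator \<X> (fst w) \<partial>Q True)
      = (\<integral>w. indicator \<X> (fst w) * g (treated_obs w) \<partial>Q True)"
    by (simp add: treated_obs_def mult.commute)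
  ultimately show ?thesis
    using matched_estimators_consistent[OF g_meas _ pos] pos by simp
qed
end
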